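(* Let $k\ge 2$ be an integer, let $x>0$ be real, and let $M_0\ge 6$ be an integer. Let $M=M(x,k)$ be the nonnegative integer satisfying $$2^k+3^k+\cdots+p_M^k\le x<2^k+3^k+\cdots+p_M^k+p_{M+1}^k .$$ If $M\ge M_0$, then $$\log M<\frac{\log x}{k+1}\cdot\frac{1}{A(M_0)}\qquad\text{and}\qquad \log M\ge \frac{\log x}{k+1}\cdot\frac{1}{B(M_0,k)}.$$
   Context: $p_n$ denotes the $n$th prime, with $p_1=2$. For $y\ge 6$ define $A(y)=\frac{\log(y/2)}{\log y}$ and $B(y,k)=\frac{\log(y+1)}{\log y}+\frac{\log\log\left((y+1)^2\right)}{\log y}\cdot\frac{k}{k+1}$. *)

theory Defs
  imports Complex_Main "HOL-Computational_Algebra.Primes" "HOL-Library.Infinite_Set"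
begin

text \<open>The n-th prime, 1-indexed: pr 1 = 2, pr 2 = 3, ... (pr 0 is a junk value).\<close>
definition pr :: "nat \<Rightarrow> nat" where
  "pr n = enumerate {p. prime p} (n - 1)"

definition A_fun :: "real \<Rightarrow> real" where
  "A_fun y = ln (y / 2) / ln y"

definition B_fun :: "real \<Rightarrow> real \<Rightarrow> real" where
  "B_fun y k = ln (y + 1) / ln y + ln (ln ((y + 1)^2)) / ln y * (k / (k + 1))"

end

theory Submission
  imports Defs "HOL-Analysis.Harmonic_Numbers"
begin

text \<open>
  Since \<open>p\<^sub>i > i\<close>, the lower hypothesis gives
  \<open>x \<ge> \<Sum>i\<le>M. i^k \<ge> M^(k+1)/(k+1) > (M/2)^(k+1)\<close>, and \<open>ln (M/2) = A(M) ln M\<close>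
  with \<open>A\<close> increasing. For the upper bound, the Chebyshev-type estimate \<open>p\<^sub>n \<le> 2 n ln n\<close>
  (\<open>n \<ge> 7\<close>) gives \<open>x < (M+1) p\<^sub>M\<^sub>+\<^sub>1^k \<le> (M+1)^(k+1) ln((M+1)^2)^k\<close>, whose
  logarithm is \<open>(k+1) B(M,k) ln M\<close> with \<open>B\<close> decreasing in \<open>M\<close>.

  For \<open>n \<ge> 50\<close> the estimate for \<open>p\<^sub>n\<close> follows from Chebyshev's inequality
  \<open>\<pi>(30m) ln (30m) \<ge> ln ((30m)! m! / ((15m)! (10m)! (6m)!))\<close>, whose right-hand side is
  bounded below by Stirling-type estimates; for \<open>7 \<le> n < 50\<close> it is checked against a table.
\<close>

section \<open>The \<open>n\<close>-th prime\<close>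

lemma enumerate_le_if_less_card:
  fixes S :: "nat set"
  assumes S: "infinite S" and n: "n < card {s\<in>S. s \<le> B}"
  shows "enumerate S n \<le> B"
proof (rule ccontr)
  assume "\<not> enumerate S n \<le> B"
  then have "{s\<in>S. s \<le> B} \<subseteq> enumerate S ` {..<n}"
  proof (intro subsetI)
    fix s assume s: "s \<in> {s\<in>S. s \<le> B}"
    then obtain i where i: "enumerate S i = s"
      using enumerate_Ex[OF S] by blast
    with s \<open>\<not> enumerate S n \<le> B\<close> have "i < n"
      using enumerate_mono_le_iff[OF S, of n i] by (auto simp: not_le)
    with i show "s \<in> enumerate S ` {..<n}" by blast
  qed
  then have "card {s\<in>S. s \<le> B} \<le> card (enumerate S ` {..<n})"
    by (intro card_mono) auto
  also have "\<dots> \<le> n"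
    using card_image_le[of "{..<n}" "enumerate S"] by simp
  finally show False using n by simp
qed

lemma pr_mono: "1 \<le> i \<Longrightarrow> i \<le> j \<Longrightarrow> pr i \<le> pr j"
  unfolding pr_def using primes_infinite by simp

lemma Suc_le_pr:
  assumes "1 \<le> n"
  shows "n + 1 \<le> pr n"
proof -
  have "i + 2 \<le> enumerate {p::nat. prime p} i" for i
  proof (induction i)
    case 0
    show ?case using prime_ge_2_nat[of "enumerate {p. prime p} 0"]
      enumerate_in_set[OF primes_infinite, of 0] by simp
  next
    case (Suc i)
    then show ?case using enumerate_step[OF primes_infinite, of i] by simp
  qed
  from this[of "n - 1"] show ?thesis using assms by (simp add: pr_def)
qed

lemma pr_le_if_le_card_primes:
  assumes "1 \<le> n" and "n \<le> card {p. prime p \<and> p \<le> B}"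
  shows "pr n \<le> B"
  unfolding pr_def using assms enumerate_le_if_less_card[OF primes_infinite, of "n - 1" B] by simp

section \<open>Legendre's formula\<close>

lemma multiplicity_le_self:
  fixes p a :: nat
  assumes "prime p" and "0 < a"
  shows "multiplicity p a \<le> a"
proof -
  have "multiplicity p a < 2 ^ multiplicity p a" by (rule less_exp)
  also have "\<dots> \<le> p ^ multiplicity p a"
    using prime_ge_2_nat[OF assms(1)] by (simp add: power_mono)
  also have "\<dots> \<le> a"
    using multiplicity_dvd[of p a] assms(2) by (simp add: dvd_imp_le)
  finally show ?thesis by simp
qed

lemma sum_of_bool_prime_power_dvd:
  fixes p a :: nat
  assumes p: "prime p" and a: "0 < a" "a \<le> K"
  shows "(\<Sum>j=1..K. of_bool (p ^ j dvd a)) = multiplicity p a"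
proof -
  have "\<not> is_unit p" "a \<noteq> 0" using p a(1) by auto
  then have dvd_iff: "p ^ j dvd a \<longleftrightarrow> j \<le> multiplicity p a" for j
    using power_dvd_iff_le_multiplicity by blast
  have "{1..K} \<inter> {j. j \<le> multiplicity p a} = {1..multiplicity p a}"
    using multiplicity_le_self[OF p a(1)] a(2) by auto
  moreover have "(\<Sum>j=1..K. of_bool (p ^ j dvd a)) = (\<Sum>j=1..K. of_bool (j \<le> multiplicity p a) :: nat)"
    by (simp only: dvd_iff)
  ultimately show ?thesis by simp
qed

lemma legendre_multiplicity_fact:
  fixes p :: nat
  assumes p: "prime p" and "n \<le> K"
  shows "multiplicity p (fact n :: nat) = (\<Sum>j=1..K. n div p ^ j)"
  using \<open>n \<le> K\<close>
proof (induction n)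
  case 0
  then show ?case by simp
next
  case (Suc n)
  have "multiplicity p (fact (Suc n) :: nat) = multiplicity p (Suc n * fact n)"
    by (simp only: fact_Suc of_nat_id)
  also have "\<dots> = multiplicity p (Suc n) + multiplicity p (fact n :: nat)"
    using p by (intro prime_elem_multiplicity_mult_distrib) simp_all
  also have "multiplicity p (Suc n) = (\<Sum>j=1..K. of_bool (p ^ j dvd Suc n))"
    using sum_of_bool_prime_power_dvd[OF p, of "Suc n" K] Suc.prems by simp
  also have "multiplicity p (fact n :: nat) = (\<Sum>j=1..K. n div p ^ j)"
    using Suc by simp
  also have "(\<Sum>j=1..K. of_bool (p ^ j dvd Suc n)) + (\<Sum>j=1..K. n div p ^ j)
      = (\<Sum>j=1..K. Suc n div p ^ j)"
    unfolding sum.distrib[symmetric]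
  proof (intro sum.cong refl)
    fix j
    have "0 < p ^ j" using p by (simp add: prime_gt_0_nat)
    then show "of_bool (p ^ j dvd Suc n) + n div p ^ j = Suc n div p ^ j"
      by (simp add: div_Suc dvd_eq_mod_eq_0)
  qed
  finally show ?case .
qed

lemma ln_fact_eq_sum_primes:
  assumes "n \<le> N"
  shows "ln (fact n :: real) = (\<Sum>p | prime p \<and> p \<le> N. real (\<Sum>j=1..N. n div p ^ j) * ln (real p))"
proof -
  let ?e = "\<lambda>p. multiplicity p (fact n :: nat)"
  have "(fact n :: real) = real (\<Prod>p\<in>prime_factors (fact n :: nat). p ^ ?e p)"
    using prod_prime_factors[of "fact n :: nat"] by simp
  then have "ln (fact n :: real) = ln (\<Prod>p\<in>prime_factors (fact n :: nat). real p ^ ?e p)"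
    by simp
  also have "\<dots> = (\<Sum>p\<in>prime_factors (fact n :: nat). real (?e p) * ln (real p))"
    by (subst ln_prod) (auto simp: ln_realpow in_prime_factors_iff prime_gt_0_nat)
  also have "\<dots> = (\<Sum>p | prime p \<and> p \<le> N. real (?e p) * ln (real p))"
    using assms
    by (intro sum.mono_neutral_left)
       (auto simp: in_prime_factors_iff prime_dvd_fact_iff intro: not_dvd_imp_multiplicity_0)
  also have "\<dots> = (\<Sum>p | prime p \<and> p \<le> N. real (\<Sum>j=1..N. n div p ^ j) * ln (real p))"
    using assms by (intro sum.cong refl) (simp add: legendre_multiplicity_fact)
  finally show ?thesis .
qed

section \<open>Chebyshev's estimate for the \<open>n\<close>-th prime\<close>

lemma ln_2_bounds: "693/1000 \<le> ln (2::real)" "ln (2::real) \<le> 6932/10000"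
  using ln_approx_bounds[of 2 4] by (simp_all add: eval_nat_numeral)

lemma ln_3_bounds: "1098/1000 \<le> ln (3::real)" "ln (3::real) \<le> 10987/10000"
  using ln_approx_bounds[of 3 5] by (simp_all add: eval_nat_numeral)

lemma ln_5_bounds: "1609/1000 \<le> ln (5::real)" "ln (5::real) \<le> 16095/10000"
  using ln_approx_bounds[of 5 8] by (simp_all add: eval_nat_numeral)

definition chebyshev_weight :: "nat \<Rightarrow> real" where
  "chebyshev_weight q = real q + real (q div 30) - real (q div 2) - real (q div 3) - real (q div 5)"

text \<open>Since 30 + 1 - 15 - 10 - 6 = 0, the weight is 30-periodic, so it suffices to check
  the residues modulo 30.\<close>
lemma chebyshev_weight_le: "chebyshev_weight q \<le> of_bool (0 < q)"
proof (cases "q = 0")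
  case False
  define a r where "a = q div 30" and "r = q mod 30"
  have q: "q = 30 * a + r" and "r < 30" unfolding a_def r_def by simp_all
  then have "r \<le> 1 + r div 2 + r div 3 + r div 5"
    by (auto simp: lessThan_nat_numeral less_Suc_eq)
  then have "q + q div 30 \<le> 1 + q div 2 + q div 3 + q div 5"
    unfolding q using \<open>r < 30\<close> by simp
  then have "real (q + q div 30) \<le> real (1 + q div 2 + q div 3 + q div 5)"
    by (simp only: of_nat_le_iff)
  with False show ?thesis by (simp add: chebyshev_weight_def)
qed (simp add: chebyshev_weight_def)

lemma card_powers_mult_ln_le:
  assumes p: "2 \<le> p" and N: "1 \<le> N"
  shows "real (card {j\<in>{1..K}. p ^ j \<le> N}) * ln (real p) \<le> ln (real N)"
proof (cases "{j\<in>{1..K}. p ^ j \<le> N} = {}")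
  case True
  then show ?thesis using N by (simp only: card.empty) simp
next
  case False
  define E where "E = {j\<in>{1..K}. p ^ j \<le> N}"
  define e where "e = Max E"
  have "finite E" "E \<noteq> {}" using False by (simp_all add: E_def)
  then have "p ^ e \<le> N" and "E \<subseteq> {1..e}"
    using Max_in[of E] Max_ge[of E] by (auto simp: e_def E_def)
  then have "real (card E) * ln (real p) \<le> real e * ln (real p)"
    using p card_mono[of "{1..e}" E] by (intro mult_right_mono) auto
  also have "\<dots> = ln (real p ^ e)" using p by (simp add: ln_realpow)
  also have "\<dots> \<le> ln (real N)"
    using p \<open>p ^ e \<le> N\<close> by (metis ln_le_cancel_iff of_nat_0_less_iff of_nat_le_iff of_nat_power
      zero_less_power less_le_trans pos2)
  finally show ?thesis unfolding E_def .
qed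

definition ln_chebyshev_ratio :: "nat \<Rightarrow> real" where
  "ln_chebyshev_ratio m = ln (fact (30 * m)) + ln (fact m)
     - ln (fact (15 * m)) - ln (fact (10 * m)) - ln (fact (6 * m))"

lemma ln_chebyshev_ratio_eq_sum_primes:
  "ln_chebyshev_ratio m =
     (\<Sum>p | prime p \<and> p \<le> 30 * m. (\<Sum>j=1..30 * m. chebyshev_weight (30 * m div p ^ j)) * ln (real p))"
proof -
  have div_cancel: "(c * x) div d div c = x div d" if "0 < c" for c x d :: nat
    using that by (simp add: div_mult2_eq[symmetric] mult.commute[of d c])
  have "m div d = 30 * m div d div 30" "15 * m div d = 30 * m div d div 2"
    "10 * m div d = 30 * m div d div 3" "6 * m div d = 30 * m div d div 5" for d
    using div_cancel[of 30 m d] div_cancel[of 2 "15 * m" d] div_cancel[of 3 "10 * m" d]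
      div_cancel[of 5 "6 * m" d] by simp_all
  then show ?thesis
    unfolding ln_chebyshev_ratio_def
    by (simp add: ln_fact_eq_sum_primes[of _ "30 * m"] chebyshev_weight_def sum_subtractf
        sum.distrib algebra_simps)
qed

lemma ln_chebyshev_ratio_le:
  assumes "1 \<le> m"
  shows "ln_chebyshev_ratio m \<le> real (card {p. prime p \<and> p \<le> 30 * m}) * ln (real (30 * m))"
proof -
  have "(\<Sum>j=1..30 * m. chebyshev_weight (30 * m div p ^ j)) * ln (real p) \<le> ln (real (30 * m))"
    if p: "prime p" for p
  proof -
    have "(\<Sum>j=1..30 * m. chebyshev_weight (30 * m div p ^ j))
        \<le> (\<Sum>j=1..30 * m. of_bool (p ^ j \<le> 30 * m))"
      using p by (intro sum_mono order.trans[OF chebyshev_weight_le])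
        (simp add: div_greater_zero_iff prime_gt_0_nat)
    also have "\<dots> = real (card {j\<in>{1..30 * m}. p ^ j \<le> 30 * m})"
      by (simp add: Int_def conj_commute)
    finally have "(\<Sum>j=1..30 * m. chebyshev_weight (30 * m div p ^ j)) * ln (real p)
        \<le> real (card {j\<in>{1..30 * m}. p ^ j \<le> 30 * m}) * ln (real p)"
      using prime_ge_2_nat[OF p] by (intro mult_right_mono) auto
    also have "\<dots> \<le> ln (real (30 * m))"
      using card_powers_mult_ln_le[of p "30 * m" "30 * m"] prime_ge_2_nat[OF p] assms by simp
    finally show ?thesis .
  qed
  then have "ln_chebyshev_ratio m \<le> (\<Sum>p | prime p \<and> p \<le> 30 * m. ln (real (30 * m)))"
    unfolding ln_chebyshev_ratio_eq_sum_primes by (intro sum_mono) simp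
  then show ?thesis by simp
qed

lemma ln_Suc_sub_ln_bounds:
  assumes "0 < n"
  shows "real n * (ln (real n + 1) - ln (real n)) \<le> 1"
    and "1 \<le> (real n + 1) * (ln (real n + 1) - ln (real n))"
proof -
  have n: "real n > 0" using assms by simp
  have "1 + 1 / real n = (real n + 1) / real n"
    using n by (simp add: field_simps)
  then have "ln (real n + 1) - ln (real n) = ln (1 + 1 / real n)"
    using n by (simp add: ln_div)
  moreover have "ln (1 + 1 / real n) \<le> 1 / real n"
    by (rule ln_add_one_self_le_self) simp
  ultimately show "real n * (ln (real n + 1) - ln (real n)) \<le> 1"
    using n by (simp add: field_simps)
  have "ln (real n / (real n + 1)) \<le> real n / (real n + 1) - 1"
    using n by (intro ln_le_minus_one) simp
  moreover have "ln (real n / (real n + 1)) = ln (real n) - ln (real n + 1)"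
    using n by (simp add: ln_div)
  moreover have "real n / (real n + 1) - 1 = - 1 / (real n + 1)"
    using n by (simp add: field_simps)
  ultimately have "1 / (real n + 1) \<le> ln (real n + 1) - ln (real n)"
    by simp
  then show "1 \<le> (real n + 1) * (ln (real n + 1) - ln (real n))"
    using n by (simp add: field_simps)
qed

lemma ln_fact_bounds:
  assumes "1 \<le> n"
  shows "real n * ln (real n) - real n + 1 \<le> ln (fact n :: real)"
    and "ln (fact n :: real) \<le> real n * ln (real n) - real n + 1 + ln (real n)"
proof -
  have "real n * ln (real n) - real n + 1 \<le> ln (fact n :: real)
      \<and> ln (fact n :: real) \<le> real n * ln (real n) - real n + 1 + ln (real n)"
    using assms
  proof (induction n rule: dec_induct)
    case (step n)
    have "ln (fact (Suc n) :: real) = ln (real n + 1) + ln (fact n)"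
      by (simp add: ln_mult add.commute)
    then show ?case
      using step.IH ln_Suc_sub_ln_bounds[of n] step.hyps by (simp add: algebra_simps)
  qed simp
  then show "real n * ln (real n) - real n + 1 \<le> ln (fact n :: real)"
    and "ln (fact n :: real) \<le> real n * ln (real n) - real n + 1 + ln (real n)" by simp_all
qed

lemma ln_chebyshev_ratio_ge:
  assumes m: "1 \<le> m"
  shows "276/10 * real m - 781/100 - 3 * ln (real m) \<le> ln_chebyshev_ratio m"
proof -
  define x l where "x = real m" and "l = ln (real m)"
  \<comment> \<open>\<open>C = 30 ln 30 - 15 ln 15 - 10 ln 10 - 6 ln 6\<close> is Chebyshev's constant\<close>
  define C S where "C = 14 * ln 2 + 9 * ln 3 + 5 * ln (5::real)" and "S = ln 2 + ln 3 + ln (5::real)"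
  have x: "1 \<le> x" using m by (simp add: x_def)
  have ln_cm: "ln (real (c * m)) = ln (real c) + l" if "0 < c" for c
    using that x by (simp add: ln_mult l_def x_def)
  have "30 * x * (ln 30 + l) - 30 * x + 1 \<le> ln (fact (30 * m) :: real)"
    using ln_fact_bounds(1)[of "30 * m"] m ln_cm[of 30] by (simp add: x_def)
  moreover have "x * l - x + 1 \<le> ln (fact m :: real)"
    using ln_fact_bounds(1)[of m] m by (simp add: x_def l_def)
  moreover have "ln (fact (15 * m) :: real) \<le> 15 * x * (ln 15 + l) - 15 * x + 1 + ln 15 + l"
    using ln_fact_bounds(2)[of "15 * m"] m ln_cm[of 15] by (simp add: x_def)
  moreover have "ln (fact (10 * m) :: real) \<le> 10 * x * (ln 10 + l) - 10 * x + 1 + ln 10 + l"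
    using ln_fact_bounds(2)[of "10 * m"] m ln_cm[of 10] by (simp add: x_def)
  moreover have "ln (fact (6 * m) :: real) \<le> 6 * x * (ln 6 + l) - 6 * x + 1 + ln 6 + l"
    using ln_fact_bounds(2)[of "6 * m"] m ln_cm[of 6] by (simp add: x_def)
  moreover have "ln (30::real) = ln 2 + ln 3 + ln 5" "ln (15::real) = ln 3 + ln 5"
    "ln (10::real) = ln 2 + ln 5" "ln (6::real) = ln 2 + ln 3"
    using ln_mult[of 2 15] ln_mult[of 3 5] ln_mult[of 2 5] ln_mult[of 2 3] by simp_all
  ultimately have "x * C - 1 - 2 * S - 3 * l \<le> ln_chebyshev_ratio m"
    unfolding ln_chebyshev_ratio_def C_def S_def by (simp add: algebra_simps)
  moreover have "x * (276/10) \<le> x * C"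
    using ln_2_bounds ln_3_bounds ln_5_bounds x unfolding C_def by (intro mult_left_mono) auto
  moreover have "S \<le> 3402/1000"
    using ln_2_bounds ln_3_bounds ln_5_bounds unfolding S_def by linarith
  ultimately have "276/10 * x - 781/100 - 3 * l \<le> ln_chebyshev_ratio m"
    by linarith
  then show ?thesis by (simp add: x_def l_def)
qed

lemma mult_ln_le_chebyshev_lower_bound:
  fixes n m :: nat
  defines "X \<equiv> 2 * real n * ln (real n)"
  assumes n: "50 \<le> n" and m: "X / 30 - 1 < real m" "real m \<le> X / 30"
  shows "real n * ln X \<le> 276/10 * real m - 781/100 - 3 * ln (real m)"
proof -
  define L where "L = ln (real n)"
  have "ln (50::real) = ln 2 + 2 * ln 5"
    using ln_mult[of 2 25] ln_mult[of 5 5] by simp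
  moreover have "ln 50 \<le> L" unfolding L_def using n by simp
  ultimately have L: "39/10 \<le> L" using ln_2_bounds ln_5_bounds by linarith
  have nL: "real n * L = X / 2" unfolding X_def L_def by simp
  have "50 * (39/10) \<le> real n * L" using n L by (intro mult_mono) auto
  then have X: "390 \<le> X" using nL by linarith
  have ln_X: "ln X = ln 2 + L + ln L"
    unfolding X_def L_def using n L by (simp add: ln_mult L_def)
  have ln_L: "ln L \<le> 2 * ln 2 - 1 + L / 4"
    using ln_le_minus_one[of "L / 4"] L ln_div[of L 4] ln_mult[of 2 2] by simp
  have "0 < real m" using m X by linarith
  then have "ln (real m) \<le> ln (X / 30)" using m by simp
  then have ln_m: "ln (real m) \<le> ln X - ln 30"
    using X ln_div[of X 30] by simp
  have "real n * ln L \<le> real n * (2 * ln 2 - 1 + L / 4)"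
    using ln_L by (intro mult_left_mono) auto
  moreover have "real n * ln 2 \<le> real n * (6932/10000)"
    using ln_2_bounds by (intro mult_left_mono) auto
  ultimately have n_ln_X: "real n * ln X \<le> 108/100 * real n + X / 2 + X / 8"
    using nL unfolding ln_X by (simp add: algebra_simps)
  \<comment> \<open>the only nonlinear ingredient: it trades the \<open>L\<close>-terms for a multiple of \<open>n\<close>\<close>
  have "0 \<le> (L - 39/10) * (59/100 * real n - 375/100)"
    using L n by (intro mult_nonneg_nonneg) auto
  moreover have "(L - 39/10) * (59/100 * real n - 375/100)
      = 59/100 * (real n * L) - 375/100 * L - 2301/1000 * real n + 14625/1000"
    by (simp add: field_simps)
  ultimately have "0 \<le> 59/200 * X - 375/100 * L - 2301/1000 * real n + 14625/1000"
    using nL by linarith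
  moreover have "ln (30::real) = ln 2 + ln 3 + ln 5"
    using ln_mult[of 2 15] ln_mult[of 3 5] by simp
  ultimately show ?thesis
    using n_ln_X ln_X ln_L ln_m m n ln_2_bounds ln_3_bounds ln_5_bounds by linarith
qed

lemma pr_le_of_ge_50:
  assumes n: "50 \<le> n"
  shows "real (pr n) \<le> 2 * real n * ln (real n)"
proof -
  define X where "X = 2 * real n * ln (real n)"
  define m where "m = nat \<lfloor>X / 30\<rfloor>"
  define N where "N = 30 * m"
  have "1 \<le> ln (real n)" using n e_less_272 by (subst ln_ge_iff) auto
  then have "50 * 1 \<le> real n * ln (real n)" using n by (intro mult_mono) auto
  then have X: "100 \<le> X" by (simp add: X_def)
  have m_X: "X / 30 - 1 < real m" "real m \<le> X / 30" unfolding m_def using X by linarith+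
  then have m: "1 \<le> m" and N_X: "real N \<le> X" and N: "30 \<le> N"
    using X by (simp_all add: N_def)
  have "real n * ln (real N) \<le> real n * ln X"
    using N_X N by (intro mult_left_mono) auto
  also have "\<dots> \<le> 276/10 * real m - 781/100 - 3 * ln (real m)"
    using mult_ln_le_chebyshev_lower_bound[OF n] m_X unfolding X_def by blast
  also have "\<dots> \<le> real (card {p. prime p \<and> p \<le> N}) * ln (real N)"
    using ln_chebyshev_ratio_ge[OF m] ln_chebyshev_ratio_le[OF m] by (simp add: N_def)
  finally have "n \<le> card {p. prime p \<and> p \<le> N}"
    using N by (simp add: mult_le_cancel_right)
  then have "pr n \<le> N" using n by (intro pr_le_if_le_card_primes) auto
  then show ?thesis using N_X by (simp add: X_def)
qed

definition small_primes :: "nat list" where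
  "small_primes = [2, 3, 5, 7, 11, 13, 17, 19, 23, 29, 31, 37, 41, 43, 47, 53, 59, 61, 67, 71, 73,
     79, 83, 89, 97, 101, 103, 107, 109, 113, 127, 131, 137, 139, 149, 151, 157, 163, 167, 173, 179,
     181, 191, 193, 197, 199, 211, 223, 227]"

lemma small_primes_prime: "list_all prime small_primes"
  unfolding small_primes_def by code_simp

lemma sorted_small_primes: "sorted small_primes"
  and distinct_small_primes: "distinct small_primes"
  and length_small_primes: "length small_primes = 49"
  unfolding small_primes_def by simp_all

lemma small_primes_bound:
  "\<forall>n\<in>{7..<50}. 10 * small_primes ! (n - 1) \<le> (if n < 16 then 34 else 54) * n"
  unfolding small_primes_def by code_simp

lemma pr_le_small_primes_nth:
  assumes "1 \<le> n" "n \<le> 49"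
  shows "pr n \<le> small_primes ! (n - 1)"
proof -
  let ?B = "small_primes ! (n - 1)"
  have "set (take n small_primes) \<subseteq> {p. prime p \<and> p \<le> ?B}"
  proof
    fix q assume "q \<in> set (take n small_primes)"
    then obtain i where i: "i < n" "q = small_primes ! i"
      using assms length_small_primes by (auto simp: in_set_conv_nth)
    then have "prime q"
      using small_primes_prime assms length_small_primes by (simp add: list_all_length)
    moreover have "q \<le> ?B"
      using i assms sorted_small_primes length_small_primes by (auto intro: sorted_nth_mono)
    ultimately show "q \<in> {p. prime p \<and> p \<le> ?B}" by simp
  qed
  then have "card (set (take n small_primes)) \<le> card {p. prime p \<and> p \<le> ?B}"
    by (intro card_mono) auto
  moreover have "card (set (take n small_primes)) = n"
    using assms distinct_small_primes length_small_primes by (simp add: distinct_card)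
  ultimately show ?thesis using assms by (intro pr_le_if_le_card_primes) auto
qed

lemma pr_le_of_less_50:
  assumes n: "7 \<le> n" "n < 50"
  shows "real (pr n) \<le> 2 * real n * ln (real n)"
proof -
  define c :: real where "c = (if n < 16 then 34/10 else 54/10)"
  have "ln (6::real) = ln 2 + ln 3" "ln (16::real) = 4 * ln 2"
    using ln_mult[of 2 3] ln_realpow[of 2 4] by simp_all
  moreover have "ln 6 \<le> ln (real n)" and "16 \<le> n \<Longrightarrow> ln 16 \<le> ln (real n)"
    using n by simp_all
  ultimately have "c \<le> 2 * ln (real n)"
    using ln_2_bounds ln_3_bounds unfolding c_def by auto
  have "pr n \<le> small_primes ! (n - 1)" using pr_le_small_primes_nth n by simp
  moreover have "10 * small_primes ! (n - 1) \<le> (if n < 16 then 34 else 54) * n"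
    using small_primes_bound n by simp
  ultimately have "10 * pr n \<le> (if n < 16 then 34 else 54) * n" by linarith
  then have "real (pr n) \<le> c * real n"
    unfolding c_def by (auto simp: field_simps split: if_splits)
  also have "\<dots> \<le> 2 * ln (real n) * real n"
    using \<open>c \<le> 2 * ln (real n)\<close> by (intro mult_right_mono) auto
  finally show ?thesis by (simp add: ac_simps)
qed

lemma pr_le_2_mult_ln: "7 \<le> n \<Longrightarrow> real (pr n) \<le> 2 * real n * ln (real n)"
  using pr_le_of_less_50 pr_le_of_ge_50 by (cases "n < 50") auto

section \<open>Power sums of primes\<close>

lemma power_Suc_diff_le:
  fixes a b :: real
  assumes "0 \<le> a" "a \<le> b"
  shows "b ^ Suc k - a ^ Suc k \<le> real (Suc k) * b ^ k * (b - a)"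
proof (induction k)
  case (Suc k)
  have "b ^ Suc (Suc k) - a ^ Suc (Suc k) = b * (b ^ Suc k - a ^ Suc k) + a ^ Suc k * (b - a)"
    by (simp add: algebra_simps)
  also have "\<dots> \<le> b * (real (Suc k) * b ^ k * (b - a)) + b ^ Suc k * (b - a)"
    using Suc assms by (intro add_mono mult_left_mono mult_right_mono power_mono) auto
  also have "\<dots> = real (Suc (Suc k)) * b ^ Suc k * (b - a)"
    by (simp add: algebra_simps)
  finally show ?case .
qed simp

lemma power_Suc_le_sum_powers: "real M ^ Suc k \<le> (real k + 1) * (\<Sum>i=1..M. real i ^ k)"
proof (induction M)
  case (Suc M)
  have "(real M + 1) ^ Suc k - real M ^ Suc k \<le> (real k + 1) * (real M + 1) ^ k"
    using power_Suc_diff_le[of "real M" "real M + 1" k] by (simp add: add.commute)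
  then have "(real M + 1) ^ Suc k \<le> real M ^ Suc k + (real k + 1) * (real M + 1) ^ k"
    by linarith
  also have "\<dots> \<le> (real k + 1) * (\<Sum>i=1..Suc M. real i ^ k)"
    using Suc by (simp add: algebra_simps)
  finally show ?case by (simp add: add.commute)
qed simp

lemma sum_pr_powers_gt:
  assumes "1 \<le> M"
  shows "(real M / 2) ^ Suc k < (\<Sum>i=1..M. real (pr i) ^ k)"
proof -
  have "real (k + 1) < 2 ^ (k + 1)"
    using less_exp[of "k + 1"] by (metis of_nat_less_iff of_nat_numeral of_nat_power)
  then have "(real M / 2) ^ Suc k < real M ^ Suc k / (real k + 1)"
    using assms by (simp add: power_divide frac_less2)
  also have "\<dots> \<le> (\<Sum>i=1..M. real i ^ k)"
    using power_Suc_le_sum_powers[of M k] by (simp add: field_simps)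
  also have "\<dots> \<le> (\<Sum>i=1..M. real (pr i) ^ k)"
    using Suc_le_pr by (intro sum_mono power_mono) force+
  finally show ?thesis .
qed

lemma sum_pr_powers_le:
  assumes "6 \<le> M"
  shows "(\<Sum>i=1..M+1. real (pr i) ^ k)
    \<le> (real M + 1) * ((real M + 1) * ln ((real M + 1)^2)) ^ k"
proof -
  have "real (pr i) \<le> (real M + 1) * ln ((real M + 1)^2)" if "i \<in> {1..M+1}" for i
  proof -
    have "real (pr i) \<le> real (pr (M + 1))" using that pr_mono by simp
    also have "\<dots> \<le> 2 * real (M + 1) * ln (real (M + 1))"
      by (rule pr_le_2_mult_ln) (use assms in simp)
    also have "\<dots> = (real M + 1) * ln ((real M + 1)^2)"
      by (simp add: ln_realpow algebra_simps)
    finally show ?thesis .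
  qed
  then have "(\<Sum>i=1..M+1. real (pr i) ^ k) \<le> (\<Sum>i=1..M+1. ((real M + 1) * ln ((real M + 1)^2)) ^ k)"
    by (intro sum_mono power_mono) auto
  then show ?thesis by (simp add: add.commute)
qed

section \<open>The functions \<open>A\<close> and \<open>B\<close>\<close>

lemma A_fun_mono:
  assumes "1 < y" "y \<le> z"
  shows "A_fun y \<le> A_fun z"
proof -
  have "A_fun w = 1 - ln 2 / ln w" if "1 < w" for w :: real
    using that by (simp add: A_fun_def ln_div field_simps)
  moreover have "ln 2 / ln z \<le> ln 2 / ln y"
    using assms by (intro divide_left_mono) auto
  ultimately show ?thesis using assms by simp
qed

lemma A_fun_pos: "2 < y \<Longrightarrow> 0 < A_fun y"
  unfolding A_fun_def by (intro divide_pos_pos) auto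

lemma B_fun_pos:
  assumes "6 \<le> y" "0 \<le> k"
  shows "0 < B_fun y k"
proof -
  have "exp 1 \<le> (y + 1)^2"
    using assms e_less_272 power_mono[of 7 "y + 1" 2] by simp
  then have "1 \<le> ln ((y + 1)^2)"
    using assms by (subst ln_ge_iff) auto
  then have "0 \<le> ln (ln ((y + 1)^2)) / ln y * (k / (k + 1))"
    using assms by (intro mult_nonneg_nonneg divide_nonneg_pos) auto
  moreover have "0 < ln (y + 1) / ln y" using assms by simp
  ultimately show ?thesis unfolding B_fun_def by linarith
qed

lemma ln_Suc_div_ln_antimono:
  fixes y z :: real
  assumes "1 < y" "y \<le> z"
  shows "ln (z + 1) / ln z \<le> ln (y + 1) / ln y"
proof -
  have ly: "0 < ln y" "ln y \<le> ln z" using assms by auto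
  have ln_Suc: "ln (w + 1) = ln w + ln (1 + 1 / w)" if "0 < w" for w :: real
  proof -
    have "1 + 1 / w = (w + 1) / w" using that by (simp add: field_simps)
    then show ?thesis using that by (simp add: ln_div)
  qed
  have "1 / z \<le> 1 / y" "0 < 1 + 1 / z"
    using assms by (auto intro: divide_left_mono add_pos_pos)
  then have "ln (1 + 1 / z) \<le> ln (1 + 1 / y)" by (subst ln_le_cancel_iff) auto
  moreover have "0 \<le> ln (1 + 1 / z)" using assms by simp
  ultimately have "ln (z + 1) * ln y \<le> ln (y + 1) * ln z"
    using assms ly ln_Suc[of y] ln_Suc[of z] mult_mono[of "ln (1 + 1 / z)" "ln (1 + 1 / y)" "ln y" "ln z"]
    by (simp add: algebra_simps)
  then show ?thesis using ly by (simp add: field_simps)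
qed

lemma ln_ln_square_div_ln_antimono:
  fixes y z :: real
  assumes y: "6 \<le> y" and yz: "y \<le> z"
  shows "ln (ln ((z + 1)^2)) / ln z \<le> ln (ln ((y + 1)^2)) / ln y"
proof -
  define u v where "u = ln ((y + 1)^2)" and "v = ln ((z + 1)^2)"
  have ly: "0 < ln y" "ln y \<le> ln z" using assms by auto
  have u: "u = 2 * ln (y + 1)" and v: "v = 2 * ln (z + 1)"
    using assms by (simp_all add: u_def v_def ln_realpow)
  have "ln 6 \<le> ln (y + 1)" using y by simp
  moreover have "ln (6::real) = ln 2 + ln 3" using ln_mult[of 2 3] by simp
  ultimately have u3: "3 \<le> u" using u ln_2_bounds ln_3_bounds by linarith
  then have ln_u: "1 \<le> ln u" using e_less_272 by (subst ln_ge_iff) auto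
  have uv: "u \<le> v" unfolding u v using yz y by simp
  have "ln ((z + 1) / (y + 1)) \<le> ln (z / y)"
    using assms by (subst ln_le_cancel_iff) (auto simp: field_simps)
  then have vu: "v - u \<le> 2 * (ln z - ln y)"
    unfolding u v using assms by (simp add: ln_div)
  have "ln v - ln u = ln (v / u)" using u3 uv by (simp add: ln_div)
  also have "\<dots> \<le> (v - u) / u"
    using ln_le_minus_one[of "v / u"] u3 uv by (simp add: field_simps)
  also have "\<dots> \<le> 2 * (ln z - ln y) / u"
    using vu u3 by (intro divide_right_mono) auto
  finally have "(ln v - ln u) * ln y \<le> 2 * (ln z - ln y) / u * ln y"
    using ly by (intro mult_right_mono) auto
  also have "\<dots> = (ln z - ln y) * (ln y / ln (y + 1))"
    using u3 unfolding u by (simp add: field_simps)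
  also have "\<dots> \<le> (ln z - ln y) * ln u"
  proof (intro mult_left_mono)
    have "ln y / ln (y + 1) \<le> 1" using y by (subst divide_le_eq_1_pos) auto
    then show "ln y / ln (y + 1) \<le> ln u" using ln_u by linarith
  qed (use ly in simp)
  finally show ?thesis
    using ly unfolding u_def v_def by (simp add: field_simps)
qed

lemma B_fun_antimono:
  assumes "6 \<le> y" "y \<le> z" "0 \<le> k"
  shows "B_fun z k \<le> B_fun y k"
proof -
  have "ln (ln ((z + 1)^2)) / ln z * (k / (k + 1)) \<le> ln (ln ((y + 1)^2)) / ln y * (k / (k + 1))"
    using ln_ln_square_div_ln_antimono[of y z] assms by (intro mult_right_mono) auto
  then show ?thesis
    using ln_Suc_div_ln_antimono[of y z] assms unfolding B_fun_def by simp
qed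

lemma ln_eq_B_fun_mult_ln:
  assumes y: "1 < y"
  shows "ln ((y + 1) * ((y + 1) * ln ((y + 1)^2)) ^ k) = (real k + 1) * (B_fun y (real k) * ln y)"
proof -
  define W where "W = ln ((y + 1)^2)"
  have W: "0 < W" and ln_y: "0 < ln y" using y by (simp_all add: W_def)
  have "B_fun y (real k) * ln y = ln (y + 1) + ln W * (real k / (real k + 1))"
    using ln_y by (simp add: B_fun_def W_def distrib_right)
  then have B: "(real k + 1) * (B_fun y (real k) * ln y) = (real k + 1) * ln (y + 1) + real k * ln W"
    by (simp add: field_simps)
  have "ln ((y + 1) * ((y + 1) * W) ^ k) = ln (y + 1) + real k * (ln (y + 1) + ln W)"
    using y W by (simp add: ln_mult_pos ln_realpow)
  then show ?thesis unfolding W_def[symmetric] B by (simp add: algebra_simps)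
qed

lemma ln_mult_A_fun_less_ln:
  fixes x :: real
  assumes M: "6 \<le> M0" "M0 \<le> M" and x: "(\<Sum>i=1..M. real (pr i) ^ k) \<le> x"
  shows "ln (real M) * ((real k + 1) * A_fun (real M0)) < ln x"
proof -
  have ln_M: "0 < ln (real M)" and "1 \<le> M" using M by simp_all
  then have gt: "(real M / 2) ^ Suc k < x"
    using sum_pr_powers_gt[of M k] x by linarith
  have pos: "0 < (real M / 2) ^ Suc k" using M by simp
  have "ln (real M / 2) = A_fun (real M) * ln (real M)"
    using ln_M by (simp add: A_fun_def)
  then have "ln (real M) * ((real k + 1) * A_fun (real M0)) \<le> (real k + 1) * ln (real M / 2)"
    using A_fun_mono[of "real M0" "real M"] M ln_M by simp
  also have "\<dots> = ln ((real M / 2) ^ Suc k)"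
    by (subst ln_realpow) simp
  also have "\<dots> < ln x"
    using gt pos by (subst ln_less_cancel_iff) (auto intro: order.strict_trans)
  finally show ?thesis .
qed

lemma ln_less_ln_mult_B_fun:
  fixes x :: real
  assumes M: "6 \<le> M0" "M0 \<le> M" and x: "0 < x" "x < (\<Sum>i=1..M+1. real (pr i) ^ k)"
  shows "ln x < ln (real M) * ((real k + 1) * B_fun (real M0) (real k))"
proof -
  have "ln x < ln ((real M + 1) * ((real M + 1) * ln ((real M + 1)^2)) ^ k)"
    using sum_pr_powers_le[of M k] M x by simp
  also have "\<dots> = (real k + 1) * (B_fun (real M) (real k) * ln (real M))"
    using M by (intro ln_eq_B_fun_mult_ln) simp
  also have "\<dots> \<le> ln (real M) * ((real k + 1) * B_fun (real M0) (real k))"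
    using B_fun_antimono[of "real M0" "real M" "real k"] M by simp
  finally show ?thesis .
qed

theorem lemma2p5:
  fixes k M M0 :: nat and x :: real
  assumes "k \<ge> 2" and "x > 0" and "M0 \<ge> 6"
    and "(\<Sum>i=1..M. real (pr i) ^ k) \<le> x"
    and "x < (\<Sum>i=1..M+1. real (pr i) ^ k)"
    and "M \<ge> M0"
  shows "ln (real M) < ln x / (real k + 1) * (1 / A_fun (real M0))
       \<and> ln (real M) \<ge> ln x / (real k + 1) * (1 / B_fun (real M0) (real k))"
proof
  have "0 < (real k + 1) * A_fun (real M0)" and "0 < (real k + 1) * B_fun (real M0) (real k)"
    using A_fun_pos[of "real M0"] B_fun_pos[of "real M0" "real k"] assms by simp_all
  then show "ln (real M) < ln x / (real k + 1) * (1 / A_fun (real M0))"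
    and "ln x / (real k + 1) * (1 / B_fun (real M0) (real k)) \<le> ln (real M)"
    using ln_mult_A_fun_less_ln[of M0 M k x] ln_less_ln_mult_B_fun[of M0 M x k] assms
    by (simp_all add: pos_less_divide_eq pos_divide_le_eq)
qed

end
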